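(* Let $A$ be a closed linear operator in a sequentially complete locally convex space $E$. Let $(\lambda_n)_{n\in\mathbb N}$ be a sequence in the resolvent set $\rho(A)$ with $\lim_{n\to\infty}|\lambda_n|=\infty$, and suppose there exist $C>0$ and $k\ge -1$ such that for every $p\in\circledast$ there exists $q\in\circledast$ with $$p(R(\lambda_n:A)x)\le C|\lambda_n|^k q(x)\quad\text{for all }x\in E,\ n\in\mathbb N.$$ Then $A$ is stationary dense and $n(A)\le k+2$.
   Context: $E$ is a Hausdorff sequentially complete locally convex space whose topology is given by a family $\circledast$ of continuous seminorms. $\rho(A)$ is the set of $\lambda\in\mathbb C$ for which $\lambda-A:D(A)\to E$ is bijective with continuous inverse $R(\lambda:A)=(\lambda-A)^{-1}$. $A$ is called stationary dense if $n(A):=\inf\{k\in\mathbb N_0:\ D(A^m)\subseteq\overline{D(A^{m+1})}\ \text{for all } m\ge k\}<\infty$. *)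

theory Defs
  imports "HOL-Analysis.Analysis"
begin

definition seminorm :: "(complex \<Rightarrow> 'a::ab_group_add \<Rightarrow> 'a) \<Rightarrow> ('a \<Rightarrow> real) \<Rightarrow> bool" where
  "seminorm sm p \<longleftrightarrow> (\<forall>x. 0 \<le> p x) \<and> (\<forall>x y. p (x + y) \<le> p x + p y)
     \<and> (\<forall>c x. p (sm c x) = cmod c * p x)"

definition seminorm_topology :: "('a::ab_group_add \<Rightarrow> real) set \<Rightarrow> 'a topology" where
  "seminorm_topology P = topology (\<lambda>U. \<forall>x\<in>U. \<exists>F \<epsilon>. finite F \<and> F \<subseteq> P \<and> \<epsilon> > 0 \<and>
       {y. \<forall>p\<in>F. p (y - x) < \<epsilon>} \<subseteq> U)"

definition seq_complete_lcs :: "(complex \<Rightarrow> 'a::ab_group_add \<Rightarrow> 'a) \<Rightarrow> ('a \<Rightarrow> real) set \<Rightarrow> bool" where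
  "seq_complete_lcs sm P \<longleftrightarrow> vector_space sm \<and> (\<forall>p\<in>P. seminorm sm p) \<and> Hausdorff_space (seminorm_topology P) \<and>
     (\<forall>x :: nat \<Rightarrow> 'a. (\<forall>p\<in>P. \<forall>\<epsilon>>0. \<exists>N. \<forall>m\<ge>N. \<forall>n\<ge>N. p (x m - x n) < \<epsilon>) \<longrightarrow>
        (\<exists>l. limitin (seminorm_topology P) x l sequentially))"

text \<open>Linear operator A with domain D (values of A outside D are irrelevant).\<close>
definition linear_operator :: "(complex \<Rightarrow> 'a::ab_group_add \<Rightarrow> 'a) \<Rightarrow> 'a set \<Rightarrow> ('a \<Rightarrow> 'a) \<Rightarrow> bool" where
  "linear_operator sm D A \<longleftrightarrow> 0 \<in> D \<and> (\<forall>x\<in>D. \<forall>y\<in>D. x + y \<in> D) \<and> (\<forall>c. \<forall>x\<in>D. sm c x \<in> D)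
     \<and> (\<forall>x\<in>D. \<forall>y\<in>D. A (x + y) = A x + A y) \<and> (\<forall>c. \<forall>x\<in>D. A (sm c x) = sm c (A x))"

definition closed_operator :: "(complex \<Rightarrow> 'a::ab_group_add \<Rightarrow> 'a) \<Rightarrow> ('a \<Rightarrow> real) set \<Rightarrow> 'a set \<Rightarrow> ('a \<Rightarrow> 'a) \<Rightarrow> bool" where
  "closed_operator sm P D A \<longleftrightarrow> linear_operator sm D A \<and>
     closedin (prod_topology (seminorm_topology P) (seminorm_topology P)) {(x, A x) | x. x \<in> D}"

definition resolvent :: "(complex \<Rightarrow> 'a::ab_group_add \<Rightarrow> 'a) \<Rightarrow> 'a set \<Rightarrow> ('a \<Rightarrow> 'a) \<Rightarrow> complex \<Rightarrow> 'a \<Rightarrow> 'a" where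
  "resolvent sm D A mu = the_inv_into D (\<lambda>x. sm mu x - A x)"

definition resolvent_set :: "(complex \<Rightarrow> 'a::ab_group_add \<Rightarrow> 'a) \<Rightarrow> ('a \<Rightarrow> real) set \<Rightarrow> 'a set \<Rightarrow> ('a \<Rightarrow> 'a) \<Rightarrow> complex set" where
  "resolvent_set sm P D A = {mu. bij_betw (\<lambda>x. sm mu x - A x) D UNIV \<and>
      continuous_map (seminorm_topology P) (seminorm_topology P) (resolvent sm D A mu)}"

fun dom_pow :: "'a set \<Rightarrow> ('a \<Rightarrow> 'a) \<Rightarrow> nat \<Rightarrow> 'a set" where
  "dom_pow D A 0 = UNIV"
| "dom_pow D A (Suc m) = {x \<in> D. A x \<in> dom_pow D A m}"

definition stationary_set :: "('a::ab_group_add \<Rightarrow> real) set \<Rightarrow> 'a set \<Rightarrow> ('a \<Rightarrow> 'a) \<Rightarrow> nat set" where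
  "stationary_set P D A = {k. \<forall>m\<ge>k. dom_pow D A m \<subseteq> seminorm_topology P closure_of dom_pow D A (Suc m)}"

text \<open>n(A); only meaningful when A is stationary dense.\<close>
definition stat_index :: "('a::ab_group_add \<Rightarrow> real) set \<Rightarrow> 'a set \<Rightarrow> ('a \<Rightarrow> 'a) \<Rightarrow> nat" where
  "stat_index P D A = Inf (stationary_set P D A)"

definition stationary_dense :: "('a::ab_group_add \<Rightarrow> real) set \<Rightarrow> 'a set \<Rightarrow> ('a \<Rightarrow> 'a) \<Rightarrow> bool" where
  "stationary_dense P D A \<longleftrightarrow> stationary_set P D A \<noteq> {}"

end

theory Submission
  imports Defs
begin

text \<open>For \<open>x\<close> in \<open>D(A^(j+1))\<close> one has \<open>\<lambda> R(\<lambda>) x - x = R(\<lambda>) A x\<close>, and writing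
  \<open>R(\<lambda>) y = (y + (\<lambda> R(\<lambda>) y - y)) / \<lambda>\<close> with \<open>y = A x\<close> sets up an induction on \<open>j\<close>, based on the
  resolvent bound, giving \<open>p (\<lambda>\<^sub>n R(\<lambda>\<^sub>n) x - x) = O(|\<lambda>\<^sub>n|^(-1) + |\<lambda>\<^sub>n|^(k-j))\<close>.
  For \<open>j > k\<close> this tends to 0, so \<open>x\<close> is the limit of \<open>\<lambda>\<^sub>n R(\<lambda>\<^sub>n) x\<close>, which lies in
  \<open>D(A^(j+2))\<close>. Hence \<open>D(A^m)\<close> lies in the closure of \<open>D(A^(m+1))\<close> for all \<open>m \<ge> \<lfloor>k\<rfloor> + 2\<close>.\<close>

lemma openin_seminorm_topology:
  "openin (seminorm_topology P) U \<longleftrightarrow>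
     (\<forall>x\<in>U. \<exists>F \<epsilon>. finite F \<and> F \<subseteq> P \<and> \<epsilon> > 0 \<and> {y. \<forall>p\<in>F. p (y - x) < \<epsilon>} \<subseteq> U)"
proof -
  let ?open = "\<lambda>U. \<forall>x\<in>U. \<exists>F \<epsilon>. finite F \<and> F \<subseteq> P \<and> \<epsilon> > 0 \<and> {y. \<forall>p\<in>F. p (y - x) < \<epsilon>} \<subseteq> U"
  have Int: "?open (S \<inter> T)" if S: "?open S" and T: "?open T" for S T
  proof
    fix x assume "x \<in> S \<inter> T"
    then have "x \<in> S" and "x \<in> T" by auto
    obtain F1 e1 where "finite F1" "F1 \<subseteq> P" "e1 > 0" "{y. \<forall>p\<in>F1. p (y - x) < e1} \<subseteq> S"
      using bspec[OF S \<open>x \<in> S\<close>] by (elim exE conjE) (rule that)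
    moreover obtain F2 e2 where "finite F2" "F2 \<subseteq> P" "e2 > 0" "{y. \<forall>p\<in>F2. p (y - x) < e2} \<subseteq> T"
      using bspec[OF T \<open>x \<in> T\<close>] by (elim exE conjE) (rule that)
    moreover have "{y. \<forall>p\<in>F1 \<union> F2. p (y - x) < min e1 e2}
        \<subseteq> {y. \<forall>p\<in>F1. p (y - x) < e1} \<inter> {y. \<forall>p\<in>F2. p (y - x) < e2}"
      by auto
    ultimately have "finite (F1 \<union> F2) \<and> F1 \<union> F2 \<subseteq> P \<and> min e1 e2 > 0 \<and>
        {y. \<forall>p\<in>F1 \<union> F2. p (y - x) < min e1 e2} \<subseteq> S \<inter> T"
      by auto
    then show "\<exists>F \<epsilon>. finite F \<and> F \<subseteq> P \<and> \<epsilon> > 0 \<and> {y. \<forall>p\<in>F. p (y - x) < \<epsilon>} \<subseteq> S \<inter> T"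
      by blast
  qed
  have Union: "?open (\<Union>K)" if K: "\<forall>S\<in>K. ?open S" for K
  proof
    fix x assume "x \<in> \<Union>K"
    then obtain S where "S \<in> K" and "x \<in> S" by blast
    obtain F e where "finite F" "F \<subseteq> P" "e > 0" "{y. \<forall>p\<in>F. p (y - x) < e} \<subseteq> S"
      using bspec[OF bspec[OF K \<open>S \<in> K\<close>] \<open>x \<in> S\<close>] by (elim exE conjE) (rule that)
    moreover have "S \<subseteq> \<Union>K"
      using \<open>S \<in> K\<close> by blast
    ultimately have "finite F \<and> F \<subseteq> P \<and> e > 0 \<and> {y. \<forall>p\<in>F. p (y - x) < e} \<subseteq> \<Union>K"
      by auto
    then show "\<exists>F \<epsilon>. finite F \<and> F \<subseteq> P \<and> \<epsilon> > 0 \<and> {y. \<forall>p\<in>F. p (y - x) < \<epsilon>} \<subseteq> \<Union>K"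
      by blast
  qed
  have "istopology ?open"
    unfolding istopology_def by (intro conjI allI impI Int Union)
  then show ?thesis
    unfolding seminorm_topology_def by (simp add: topology_inverse')
qed

lemma topspace_seminorm_topology [simp]: "topspace (seminorm_topology P) = UNIV"
proof -
  have "openin (seminorm_topology P) UNIV"
    unfolding openin_seminorm_topology by (intro ballI exI[of _ "{}"] exI[of _ 1]) auto
  then show ?thesis
    using openin_subset by blast
qed

lemma in_closure_of_seminorm_topology_sequentially:
  assumes "\<And>p. p \<in> P \<Longrightarrow> ((\<lambda>n. p (y n - x)) \<longlongrightarrow> 0) sequentially"
    and "\<And>n. y n \<in> S"
  shows "x \<in> seminorm_topology P closure_of S"
  unfolding in_closure_of topspace_seminorm_topology
proof (intro conjI UNIV_I allI impI)
  fix T assume "x \<in> T \<and> openin (seminorm_topology P) T"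
  then obtain F e where F: "finite F" "F \<subseteq> P" "e > 0" "{z. \<forall>p\<in>F. p (z - x) < e} \<subseteq> T"
    unfolding openin_seminorm_topology by blast
  have "\<forall>p\<in>F. eventually (\<lambda>n. p (y n - x) < e) sequentially"
    using F(2,3) by (intro ballI order_tendstoD(2)[OF assms(1)]) auto
  then have "eventually (\<lambda>n. \<forall>p\<in>F. p (y n - x) < e) sequentially"
    by (rule eventually_ball_finite[OF F(1)])
  then obtain n where "\<forall>p\<in>F. p (y n - x) < e"
    unfolding eventually_sequentially by blast
  then show "\<exists>z. z \<in> S \<and> z \<in> T"
    using F(4) assms(2)[of n] by blast
qed

lemma seminorm_nonneg: "seminorm sm p \<Longrightarrow> 0 \<le> p x"
  and seminorm_triangle: "seminorm sm p \<Longrightarrow> p (x + y) \<le> p x + p y"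
  and seminorm_scale: "seminorm sm p \<Longrightarrow> p (sm c x) = cmod c * p x"
  unfolding seminorm_def by blast+

lemma seminorm_le_scaled:
  assumes "vector_space sm" and "seminorm sm p" and "c \<noteq> 0"
  shows "p z \<le> (p y + p (sm c z - y)) / cmod c"
proof -
  interpret vector_space sm by fact
  have "z = sm (inverse c) (y + (sm c z - y))"
    using \<open>c \<noteq> 0\<close> by simp
  then have "p z = p (sm (inverse c) (y + (sm c z - y)))"
    by (rule arg_cong)
  also have "\<dots> = p (y + (sm c z - y)) / cmod c"
    unfolding seminorm_scale[OF assms(2)] by (simp only: norm_inverse divide_inverse_commute)
  also have "\<dots> \<le> (p y + p (sm c z - y)) / cmod c"
    by (rule divide_right_mono[OF seminorm_triangle[OF assms(2)]]) simp
  finally show ?thesis .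
qed

lemma linear_operator_diff:
  assumes "vector_space sm" and "linear_operator sm D A" and "x \<in> D" and "y \<in> D"
  shows "x - y \<in> D" and "A (x - y) = A x - A y"
proof -
  interpret vector_space sm by fact
  have "sm (-1) y \<in> D" and "A (sm (-1) y) = sm (-1) (A y)"
    using assms(2,4) unfolding linear_operator_def by blast+
  then have "- y \<in> D" and "A (- y) = - A y"
    by simp_all
  then have "x + - y \<in> D" and "A (x + - y) = A x + A (- y)"
    using assms(2,3) unfolding linear_operator_def by blast+
  then show "x - y \<in> D" and "A (x - y) = A x - A y"
    using \<open>A (- y) = - A y\<close> by simp_all
qed

lemma dom_pow_scale:
  assumes "linear_operator sm D A" and "x \<in> dom_pow D A m"
  shows "sm c x \<in> dom_pow D A m"
  using assms(2)
proof (induction m arbitrary: x)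
  case (Suc m)
  then show ?case using assms(1) unfolding linear_operator_def by auto
qed simp

locale resolvent_bij =
  fixes sm :: "complex \<Rightarrow> 'a::ab_group_add \<Rightarrow> 'a" and D :: "'a set" and A :: "'a \<Rightarrow> 'a"
    and \<mu> :: complex
  assumes vector_space: "vector_space sm"
    and linear: "linear_operator sm D A"
    and bij: "bij_betw (\<lambda>x. sm \<mu> x - A x) D UNIV"
begin

abbreviation R where "R \<equiv> resolvent sm D A \<mu>"

lemma resolvent_in_domain: "R y \<in> D"
  and resolvent_right_inverse: "sm \<mu> (R y) - A (R y) = y"
  and resolvent_left_inverse: "x \<in> D \<Longrightarrow> R (sm \<mu> x - A x) = x"
proof -
  have inj: "inj_on (\<lambda>x. sm \<mu> x - A x) D" and surj: "y \<in> (\<lambda>x. sm \<mu> x - A x) ` D"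
    using bij by (auto simp: bij_betw_def)
  show "R y \<in> D"
    unfolding resolvent_def by (rule the_inv_into_into[OF inj surj order_refl])
  show "sm \<mu> (R y) - A (R y) = y"
    unfolding resolvent_def by (rule f_the_inv_into_f[OF inj surj])
  show "x \<in> D \<Longrightarrow> R (sm \<mu> x - A x) = x"
    unfolding resolvent_def by (rule the_inv_into_f_f[OF inj])
qed

lemma A_resolvent: "A (R y) = sm \<mu> (R y) - y"
  using resolvent_right_inverse[of y] by (metis add_diff_cancel_left' diff_add_cancel)

lemma resolvent_commute:
  assumes "x \<in> D"
  shows "A (R x) = R (A x)"
proof -
  have \<mu>R: "sm \<mu> (R x) \<in> D" "A (sm \<mu> (R x)) = sm \<mu> (A (R x))"
    using linear resolvent_in_domain unfolding linear_operator_def by auto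
  define u where "u = A (R x)"
  have u: "u = sm \<mu> (R x) - x"
    unfolding u_def by (rule A_resolvent)
  have "u \<in> D"
    unfolding u by (rule linear_operator_diff(1)[OF vector_space linear \<mu>R(1) assms])
  have "sm \<mu> u - A u = A x"
    using linear_operator_diff(2)[OF vector_space linear \<mu>R(1) assms] \<mu>R(2)
    unfolding u[symmetric] by (simp add: u_def)
  then have "R (A x) = u"
    using resolvent_left_inverse[OF \<open>u \<in> D\<close>] by simp
  then show ?thesis
    unfolding u_def ..
qed

lemma scaled_resolvent_minus_id: "x \<in> D \<Longrightarrow> sm \<mu> (R x) - x = R (A x)"
  using A_resolvent[of x] resolvent_commute[of x] by simp

lemma resolvent_dom_pow: "x \<in> dom_pow D A m \<Longrightarrow> R x \<in> dom_pow D A (Suc m)"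
proof (induction m arbitrary: x)
  case (Suc m)
  then show ?case
    using resolvent_in_domain resolvent_commute by auto
qed (simp add: resolvent_in_domain)

end

lemma powr_bound_step:
  fixes L B c r :: real
  assumes "L \<ge> 1" and "B \<ge> 0" and "c \<ge> 0"
  shows "(c + B * (L powr -1 + L powr r)) / L \<le> (c + B) * (L powr -1 + L powr (r - 1))"
proof -
  have "L powr -1 = 1 / L" and "L powr (r - 1) = L powr r / L"
    using assms(1) by (simp_all add: powr_minus_divide powr_diff)
  then have lhs: "(c + B * (L powr -1 + L powr r)) / L = c / L + B / L / L + B * L powr r / L"
    and rhs: "(c + B) * (L powr -1 + L powr (r - 1)) = c / L + c * L powr r / L + B / L + B * L powr r / L"
    by (simp_all add: algebra_simps add_divide_distrib)
  have "B / L / L \<le> B / L"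
    using divide_left_mono[of 1 L "B / L"] assms by simp
  moreover have "0 \<le> c * L powr r / L"
    using assms by simp
  ultimately show ?thesis
    unfolding lhs rhs by linarith
qed

locale polynomially_bounded_resolvents =
  fixes sm :: "complex \<Rightarrow> 'a::ab_group_add \<Rightarrow> 'a" and P :: "('a \<Rightarrow> real) set"
    and D :: "'a set" and A :: "'a \<Rightarrow> 'a"
    and lam :: "nat \<Rightarrow> complex" and C k :: real
  assumes vector_space: "vector_space sm"
    and seminorms: "\<And>p. p \<in> P \<Longrightarrow> seminorm sm p"
    and linear: "linear_operator sm D A"
    and bij: "\<And>n. bij_betw (\<lambda>x. sm (lam n) x - A x) D UNIV"
    and lam_unbounded: "filterlim (\<lambda>n. cmod (lam n)) at_top sequentially"
    and C_nonneg: "C \<ge> 0"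
    and resolvent_bound: "\<forall>p\<in>P. \<exists>q\<in>P. \<forall>x n. p (resolvent sm D A (lam n) x) \<le> C * cmod (lam n) powr k * q x"
begin

abbreviation R where "R n \<equiv> resolvent sm D A (lam n)"

lemma resolvent_bij: "resolvent_bij sm D A (lam n)"
  using vector_space linear bij by (rule resolvent_bij.intro)

lemma scaled_resolvent_estimate:
  assumes "x \<in> dom_pow D A (Suc j)" and "p \<in> P"
  shows "\<exists>B\<ge>0. \<forall>\<^sub>F n in sequentially.
           p (sm (lam n) (R n x) - x) \<le> B * (cmod (lam n) powr -1 + cmod (lam n) powr (k - j))"
  using assms(1)
proof (induction j arbitrary: x)
  case 0
  then have "x \<in> D" by simp
  obtain q where "q \<in> P" and q: "\<And>y n. p (R n y) \<le> C * cmod (lam n) powr k * q y"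
    using resolvent_bound assms(2) by blast
  have "0 \<le> q (A x)"
    using seminorm_nonneg seminorms \<open>q \<in> P\<close> by blast
  have "p (sm (lam n) (R n x) - x) \<le> C * q (A x) * (cmod (lam n) powr -1 + cmod (lam n) powr (k - 0))" for n
  proof -
    have "p (sm (lam n) (R n x) - x) = p (R n (A x))"
      using resolvent_bij.scaled_resolvent_minus_id[OF resolvent_bij \<open>x \<in> D\<close>] by simp
    also have "\<dots> \<le> C * cmod (lam n) powr k * q (A x)"
      by (rule q)
    also have "\<dots> \<le> C * q (A x) * (cmod (lam n) powr -1 + cmod (lam n) powr (k - 0))"
      using \<open>0 \<le> q (A x)\<close> C_nonneg by (simp add: algebra_simps)
    finally show ?thesis .
  qed
  then show ?case
    using \<open>0 \<le> q (A x)\<close> C_nonneg by (intro exI[of _ "C * q (A x)"]) simp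
next
  case (Suc j)
  then have "x \<in> D" and "A x \<in> dom_pow D A (Suc j)" by auto
  then obtain B where "B \<ge> 0" and B: "\<forall>\<^sub>F n in sequentially.
      p (sm (lam n) (R n (A x)) - A x) \<le> B * (cmod (lam n) powr -1 + cmod (lam n) powr (k - j))"
    using Suc.IH by blast
  have p: "seminorm sm p"
    using seminorms assms(2) .
  have "\<forall>\<^sub>F n in sequentially. cmod (lam n) \<ge> 1"
    using lam_unbounded by (simp add: filterlim_at_top)
  with B have "\<forall>\<^sub>F n in sequentially. p (sm (lam n) (R n x) - x)
      \<le> (p (A x) + B) * (cmod (lam n) powr -1 + cmod (lam n) powr (k - Suc j))"
  proof eventually_elim
    case (elim n)
    then have "lam n \<noteq> 0" by auto
    have "p (sm (lam n) (R n x) - x) = p (R n (A x))"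
      using resolvent_bij.scaled_resolvent_minus_id[OF resolvent_bij \<open>x \<in> D\<close>] by simp
    also have "\<dots> \<le> (p (A x) + p (sm (lam n) (R n (A x)) - A x)) / cmod (lam n)"
      by (rule seminorm_le_scaled[OF vector_space p \<open>lam n \<noteq> 0\<close>])
    also have "\<dots> \<le> (p (A x) + B * (cmod (lam n) powr -1 + cmod (lam n) powr (k - j))) / cmod (lam n)"
      using elim(1) elim(2) by (simp add: divide_right_mono)
    also have "\<dots> \<le> (p (A x) + B) * (cmod (lam n) powr -1 + cmod (lam n) powr (k - j - 1))"
      using elim(2) \<open>B \<ge> 0\<close> seminorm_nonneg[OF p] by (rule powr_bound_step)
    finally show ?case
      by (simp add: diff_diff_eq add.commute)
  qed
  then show ?case
    using \<open>B \<ge> 0\<close> seminorm_nonneg[OF p] by (intro exI[of _ "p (A x) + B"]) simp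
qed

lemma scaled_resolvent_tendsto:
  assumes "x \<in> dom_pow D A (Suc j)" and "k < j" and "p \<in> P"
  shows "((\<lambda>n. p (sm (lam n) (R n x) - x)) \<longlongrightarrow> 0) sequentially"
proof -
  obtain B where B: "\<forall>\<^sub>F n in sequentially.
      p (sm (lam n) (R n x) - x) \<le> B * (cmod (lam n) powr -1 + cmod (lam n) powr (k - j))"
    using scaled_resolvent_estimate assms(1,3) by blast
  have "((\<lambda>n. cmod (lam n) powr -1) \<longlongrightarrow> 0) sequentially"
    by (rule tendsto_neg_powr[OF _ lam_unbounded]) simp
  moreover have "((\<lambda>n. cmod (lam n) powr (k - j)) \<longlongrightarrow> 0) sequentially"
    using assms(2) by (intro tendsto_neg_powr[OF _ lam_unbounded]) simp
  ultimately have bound_to_zero: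
    "((\<lambda>n. B * (cmod (lam n) powr -1 + cmod (lam n) powr (k - j))) \<longlongrightarrow> 0) sequentially"
    by (intro tendsto_mult_right_zero tendsto_add_zero)
  have "\<forall>\<^sub>F n in sequentially. 0 \<le> p (sm (lam n) (R n x) - x)"
    using seminorm_nonneg[OF seminorms[OF assms(3)]] by simp
  then show ?thesis
    using B tendsto_const bound_to_zero by (rule tendsto_sandwich)
qed

lemma dom_pow_subset_closure:
  assumes "k < j"
  shows "dom_pow D A (Suc j) \<subseteq> seminorm_topology P closure_of dom_pow D A (Suc (Suc j))"
proof
  fix x assume x: "x \<in> dom_pow D A (Suc j)"
  show "x \<in> seminorm_topology P closure_of dom_pow D A (Suc (Suc j))"
  proof (rule in_closure_of_seminorm_topology_sequentially[where y = "\<lambda>n. sm (lam n) (R n x)"])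
    show "((\<lambda>n. p (sm (lam n) (R n x) - x)) \<longlongrightarrow> 0) sequentially" if "p \<in> P" for p
      using x assms that by (rule scaled_resolvent_tendsto)
    show "sm (lam n) (R n x) \<in> dom_pow D A (Suc (Suc j))" for n
      using dom_pow_scale[OF linear resolvent_bij.resolvent_dom_pow[OF resolvent_bij x]] .
  qed
qed

lemma Suc_in_stationary_set:
  assumes "k < j"
  shows "Suc j \<in> stationary_set P D A"
  unfolding stationary_set_def
proof (intro CollectI allI impI)
  fix m assume "Suc j \<le> m"
  then obtain i where "m = Suc i" and "j \<le> i"
    by (metis Suc_le_D Suc_le_mono)
  then show "dom_pow D A m \<subseteq> seminorm_topology P closure_of dom_pow D A (Suc m)"
    using dom_pow_subset_closure[of i] assms by simp
qed

end

theorem lemma2p4: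
  fixes sm :: "complex \<Rightarrow> 'a::ab_group_add \<Rightarrow> 'a"
    and P :: "('a \<Rightarrow> real) set"
    and D :: "'a set" and A :: "'a \<Rightarrow> 'a"
    and lam :: "nat \<Rightarrow> complex" and C k :: real
  assumes "seq_complete_lcs sm P"
    and "closed_operator sm P D A"
    and "\<And>n. lam n \<in> resolvent_set sm P D A"
    and "filterlim (\<lambda>n. cmod (lam n)) at_top sequentially"
    and "C > 0" and "k \<ge> -1"
    and "\<forall>p\<in>P. \<exists>q\<in>P. \<forall>x n. p (resolvent sm D A (lam n) x) \<le> C * cmod (lam n) powr k * q x"
  shows "stationary_dense P D A \<and> real (stat_index P D A) \<le> k + 2"
proof -
  interpret polynomially_bounded_resolvents sm P D A lam C k
    using assms unfolding polynomially_bounded_resolvents_def seq_complete_lcs_def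
      closed_operator_def resolvent_set_def by auto
  define j where "j = nat (\<lfloor>k\<rfloor> + 1)"
  have j: "real j = \<lfloor>k\<rfloor> + 1"
    using \<open>k \<ge> -1\<close> unfolding j_def by linarith
  then have "Suc j \<in> stationary_set P D A"
    by (intro Suc_in_stationary_set) linarith
  then have "stat_index P D A \<le> Suc j"
    unfolding stat_index_def by (rule cInf_lower) simp
  then have "real (stat_index P D A) \<le> k + 2"
    using j of_int_floor_le[of k] by linarith
  then show ?thesis
    using \<open>Suc j \<in> stationary_set P D A\<close> unfolding stationary_dense_def by auto
qed
end
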